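(* Let $n\ge 3$ and let $f:[n]\to\mathbb{R}$ be a function having at most $2$ distinct discrete derivatives. Consider the following deterministic adaptive procedure: (1) Query $f(1),f(2),f(n-1),f(n)$. (2) Define the affine functions $f_1(x)=f(1)+(x-1)\bigl(f(2)-f(1)\bigr)$ and $f_2(x)=f(n)-(n-x)\bigl(f(n)-f(n-1)\bigr)$. (3) If there is no $j\in[n]$ with $f_1(j)=f_2(j)$, reject. Otherwise pick any such $j\in[n]$ and query $f(j)$. (4) Reject if the restriction of $f$ to $\{1,2,j,n-1,n\}$ is not convex or if $f(j)\neq f_1(j)$; otherwise accept. Then this procedure makes at most $5$ queries, accepts every convex such $f$, and rejects every such $f$ that is not convex. In particular, there is a deterministic algorithm that, given oracle access to any $f:[n]\to\mathbb{R}$ with at most $2$ distinct discrete derivatives, decides exactly whether $f$ is convex using at most $5$ adaptive queries.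
   Context: For $f:[n]\to\mathbb{R}$ (where $[n]=\{1,\dots,n\}$), the discrete derivative at $i\in[n-1]$ is $\Delta_f(i)=f(i+1)-f(i)$; the number of distinct discrete derivatives of $f$ is the cardinality of $\{\Delta_f(i): i\in[n-1]\}$. For a finite set $B\subseteq\mathbb{R}$, a function $g:B\to\mathbb{R}$ is convex if $\frac{g(y)-g(x)}{y-x}\le\frac{g(z)-g(y)}{z-y}$ for all $x<y<z$ in $B$; for $B=[n]$ this is equivalent to $\Delta_g$ being non-decreasing. "Adaptive" means later query points may depend on answers to earlier queries. *)

theory Defs
  imports Main "HOL.Real"
begin

text \<open>Functions f : [n] -> R are modelled as f :: nat => real; only the values on {1..n} matter.\<close>

definition discrete_derivs :: "nat \<Rightarrow> (nat \<Rightarrow> real) \<Rightarrow> real set" where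
  "discrete_derivs n f = {f (i + 1) - f i | i. i \<in> {1..n - 1}}"

definition num_discrete_derivs :: "nat \<Rightarrow> (nat \<Rightarrow> real) \<Rightarrow> nat" where
  "num_discrete_derivs n f = card (discrete_derivs n f)"

definition convex_on_pts :: "nat set \<Rightarrow> (nat \<Rightarrow> real) \<Rightarrow> bool" where
  "convex_on_pts B g \<longleftrightarrow>
     (\<forall>x\<in>B. \<forall>y\<in>B. \<forall>z\<in>B. x < y \<and> y < z \<longrightarrow>
        (g y - g x) / (real y - real x) \<le> (g z - g y) / (real z - real y))"

definition aff1 :: "(nat \<Rightarrow> real) \<Rightarrow> real \<Rightarrow> real" where
  "aff1 f x = f 1 + (x - 1) * (f 2 - f 1)"

definition aff2 :: "nat \<Rightarrow> (nat \<Rightarrow> real) \<Rightarrow> real \<Rightarrow> real" where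
  "aff2 n f x = f n - (real n - x) * (f n - f (n - 1))"

definition candidates :: "nat \<Rightarrow> (nat \<Rightarrow> real) \<Rightarrow> nat set" where
  "candidates n f = {j \<in> {1..n}. aff1 f (real j) = aff2 n f (real j)}"

definition final_test :: "nat \<Rightarrow> (nat \<Rightarrow> real) \<Rightarrow> nat \<Rightarrow> bool" where
  "final_test n f j \<longleftrightarrow> convex_on_pts {1, 2, j, n - 1, n} f \<and> f j = aff1 f (real j)"

definition first_queries :: "nat \<Rightarrow> nat set" where
  "first_queries n = {1, 2, n - 1, n}"

end

theory Submission
  imports Defs
begin

text \<open>
  If f is convex with at most two discrete derivatives, its derivatives form a nondecreasing
  sequence with at most two values, i.e. a step from f(2) - f(1) to f(n) - f(n-1) at some
  breakpoint k. Hence f agrees with the line f_1 on [1,k] and with f_2 on [k,n]; so k is an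
  intersection point, and f(j) = f_1(j) at every intersection point j.
  Conversely, f(j) = f_1(j) = f_2(j) says that the average derivative on [1,j) is f(2) - f(1) and
  on [j,n) is f(n) - f(n-1). Both are among the at most two derivative values, and a two-valued
  sequence whose mean is one of its values is constant; so the derivatives step once, upwards
  because convexity at the points 1, 2, n-1, n gives f(2) - f(1) \<le> f(n) - f(n-1).
\<close>

lemma card_le_two_eq:
  assumes "finite A" "card A \<le> 2" "x \<in> A" "y \<in> A" "z \<in> A" "x \<noteq> y" "x \<noteq> z"
  shows "y = z"
proof (rule ccontr)
  assume "y \<noteq> z"
  with assms have "card {x, y, z} = 3" by auto
  moreover have "card {x, y, z} \<le> card A" using assms by (intro card_mono) auto
  ultimately show False using assms(2) by simp
qed

lemma diffs_const_telescope:
  fixes f :: "nat \<Rightarrow> 'a::comm_ring_1"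
  assumes "lo \<le> hi" "\<And>i. i \<in> {lo..<hi} \<Longrightarrow> f (Suc i) - f i = c"
  shows "f hi - f lo = (of_nat hi - of_nat lo) * c"
proof -
  have "f hi - f lo = (\<Sum>i = lo..<hi. f (Suc i) - f i)" using sum_Suc_diff' assms(1) by metis
  also have "\<dots> = of_nat (hi - lo) * c" using assms(2) by simp
  finally show ?thesis using assms(1) by (simp add: of_nat_diff)
qed

lemma diffs_eq_if_ge_and_tight:
  fixes f :: "nat \<Rightarrow> 'a::linordered_idom"
  assumes "lo \<le> hi" "\<And>i. i \<in> {lo..<hi} \<Longrightarrow> c \<le> f (Suc i) - f i"
    and "f hi - f lo = (of_nat hi - of_nat lo) * c"
  shows "\<forall>i\<in>{lo..<hi}. f (Suc i) - f i = c"
proof -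
  have "(\<Sum>i = lo..<hi. f (Suc i) - f i - c) = f hi - f lo - of_nat (hi - lo) * c"
    using sum_Suc_diff' assms(1) by (simp add: sum_subtractf)
  also have "\<dots> = 0" using assms(1,3) by (simp add: of_nat_diff)
  finally show ?thesis using assms(2) by (subst (asm) sum_nonneg_eq_0_iff) auto
qed

lemma diffs_eq_if_le_and_tight:
  fixes f :: "nat \<Rightarrow> 'a::linordered_idom"
  assumes "lo \<le> hi" "\<And>i. i \<in> {lo..<hi} \<Longrightarrow> f (Suc i) - f i \<le> c"
    and "f hi - f lo = (of_nat hi - of_nat lo) * c"
  shows "\<forall>i\<in>{lo..<hi}. f (Suc i) - f i = c"
  using diffs_eq_if_ge_and_tight[of lo hi "- c" "\<lambda>i. - f i"] assms by (simp add: algebra_simps)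

lemma diffs_eq_if_two_valued_and_tight:
  fixes f :: "nat \<Rightarrow> 'a::linordered_idom"
  assumes "lo \<le> hi" "finite V" "card V \<le> 2" "c \<in> V"
    and "\<And>i. i \<in> {lo..<hi} \<Longrightarrow> f (Suc i) - f i \<in> V"
    and "f hi - f lo = (of_nat hi - of_nat lo) * c"
  shows "\<forall>i\<in>{lo..<hi}. f (Suc i) - f i = c"
proof -
  have "(\<forall>i\<in>{lo..<hi}. c \<le> f (Suc i) - f i) \<or> (\<forall>i\<in>{lo..<hi}. f (Suc i) - f i \<le> c)"
  proof (rule ccontr)
    assume "\<not> ?thesis"
    then obtain i i' where "i \<in> {lo..<hi}" "f (Suc i) - f i < c"
      and "i' \<in> {lo..<hi}" "c < f (Suc i') - f i'" by force
    moreover have "f (Suc i) - f i \<in> V" "f (Suc i') - f i' \<in> V"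
      using assms(5) \<open>i \<in> {lo..<hi}\<close> \<open>i' \<in> {lo..<hi}\<close> by auto
    ultimately show False
      using card_le_two_eq[OF assms(2,3,4), of "f (Suc i) - f i" "f (Suc i') - f i'"] by auto
  qed
  then show ?thesis
  proof
    assume "\<forall>i\<in>{lo..<hi}. c \<le> f (Suc i) - f i"
    then show ?thesis using diffs_eq_if_ge_and_tight assms(1,6) by blast
  next
    assume "\<forall>i\<in>{lo..<hi}. f (Suc i) - f i \<le> c"
    then show ?thesis using diffs_eq_if_le_and_tight assms(1,6) by blast
  qed
qed

lemma convex_on_pts_slope_mono:
  assumes "convex_on_pts B g" "w \<in> B" "x \<in> B" "y \<in> B" "z \<in> B" "w < x" "x \<le> y" "y < z"
  shows "(g x - g w) / (real x - real w) \<le> (g z - g y) / (real z - real y)"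
proof (cases "x = y")
  case True
  then show ?thesis using assms(1,2,4,5,6,8) unfolding convex_on_pts_def by simp
next
  case False
  have "(g x - g w) / (real x - real w) \<le> (g y - g x) / (real y - real x)"
    using assms False unfolding convex_on_pts_def by simp
  moreover have "(g y - g x) / (real y - real x) \<le> (g z - g y) / (real z - real y)"
    using assms False unfolding convex_on_pts_def by simp
  ultimately show ?thesis by linarith
qed

lemma convex_on_pts_subset:
  "convex_on_pts C g \<Longrightarrow> B \<subseteq> C \<Longrightarrow> convex_on_pts B g"
  unfolding convex_on_pts_def by blast

lemma convex_on_pts_cong:
  "(\<And>x. x \<in> B \<Longrightarrow> g x = f x) \<Longrightarrow> convex_on_pts B g = convex_on_pts B f"
  unfolding convex_on_pts_def by auto

lemma convex_on_pts_atLeastAtMost_iff: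
  "convex_on_pts {lo..hi} f \<longleftrightarrow> mono_on {lo..<hi} (\<lambda>i. f (Suc i) - f i)"
proof
  assume convex: "convex_on_pts {lo..hi} f"
  show "mono_on {lo..<hi} (\<lambda>i. f (Suc i) - f i)"
  proof (rule mono_onI)
    fix i i' assume "i \<in> {lo..<hi}" "i' \<in> {lo..<hi}" "i \<le> i'"
    then have "{i..<i'} \<subseteq> {lo..<hi - 1}" by auto
    moreover have "f (Suc m) - f m \<le> f (Suc (Suc m)) - f (Suc m)" if "m \<in> {lo..<hi - 1}" for m
      using convex_on_pts_slope_mono[OF convex, of m "Suc m" "Suc m" "Suc (Suc m)"] that
      by (simp add: less_diff_conv)
    ultimately show "f (Suc i) - f i \<le> f (Suc i') - f i'"
      using lift_Suc_mono_le_ivl[of "{lo..<hi - 1}" "\<lambda>i. f (Suc i) - f i" i i'] \<open>i \<le> i'\<close>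
      by blast
  qed
next
  assume mono: "mono_on {lo..<hi} (\<lambda>i. f (Suc i) - f i)"
  show "convex_on_pts {lo..hi} f"
    unfolding convex_on_pts_def
  proof (intro ballI impI)
    fix x y z assume "x \<in> {lo..hi}" "y \<in> {lo..hi}" "z \<in> {lo..hi}" "x < y \<and> y < z"
    then have "real y - real x > 0" "real z - real y > 0" by auto
    define c where "c = f y - f (y - 1)"
    have c_eq: "c = f (Suc (y - 1)) - f (y - 1)"
      using \<open>x < y \<and> y < z\<close> unfolding c_def by simp
    have "f (Suc i) - f i \<le> c" if "i \<in> {x..<y}" for i
      unfolding c_eq using that \<open>x \<in> {lo..hi}\<close> \<open>y \<in> {lo..hi}\<close>
      by (intro mono_onD[OF mono]) auto
    then have "f y - f x \<le> (real y - real x) * c"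
      using sum_bounded_above[of "{x..<y}" "\<lambda>i. f (Suc i) - f i" c] sum_Suc_diff'[of x y f]
        \<open>x < y \<and> y < z\<close> by (simp add: of_nat_diff)
    then have "(f y - f x) / (real y - real x) \<le> c"
      using \<open>real y - real x > 0\<close> by (simp add: pos_divide_le_eq mult.commute)
    moreover have "c \<le> f (Suc i) - f i" if "i \<in> {y..<z}" for i
      unfolding c_eq using that \<open>x \<in> {lo..hi}\<close> \<open>z \<in> {lo..hi}\<close> \<open>x < y \<and> y < z\<close>
      by (intro mono_onD[OF mono]) auto
    then have "(real z - real y) * c \<le> f z - f y"
      using sum_bounded_below[of "{y..<z}" c "\<lambda>i. f (Suc i) - f i"] sum_Suc_diff'[of y z f]
        \<open>x < y \<and> y < z\<close> by (simp add: of_nat_diff)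
    then have "c \<le> (f z - f y) / (real z - real y)"
      using \<open>real z - real y > 0\<close> by (simp add: pos_le_divide_eq mult.commute)
    ultimately show "(f y - f x) / (real y - real x) \<le> (f z - f y) / (real z - real y)"
      by (rule order_trans)
  qed
qed

lemma mono_on_two_valued_step:
  fixes g :: "nat \<Rightarrow> 'a::linorder"
  assumes mono: "mono_on {lo..<hi} g" and two: "card (g ` {lo..<hi}) \<le> 2" and "lo < hi"
  shows "\<exists>k\<in>{lo<..hi}. \<forall>i\<in>{lo..<hi}. g i = (if i < k then g lo else g (hi - 1))"
proof -
  define S where "S = {i\<in>{lo..<hi}. g i = g lo}"
  have "finite S" "lo \<in> S" using \<open>lo < hi\<close> unfolding S_def by auto
  then have "Max S \<in> S" by (intro Max_in) auto
  then have max: "Max S \<in> {lo..<hi}" "g (Max S) = g lo" unfolding S_def by auto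
  have "g i = (if i < Suc (Max S) then g lo else g (hi - 1))" if i: "i \<in> {lo..<hi}" for i
  proof (cases "i < Suc (Max S)")
    case True
    then have "g lo \<le> g i" "g i \<le> g (Max S)"
      using i max mono_onD[OF mono, of lo i] mono_onD[OF mono, of i "Max S"] by auto
    with True max show ?thesis by simp
  next
    case False
    then have "i \<notin> S" using Max_ge[OF \<open>finite S\<close>] by fastforce
    then have "g i \<noteq> g lo" using i unfolding S_def by simp
    moreover have "g lo \<le> g i" "g i \<le> g (hi - 1)"
      using i mono_onD[OF mono, of lo i] mono_onD[OF mono, of i "hi - 1"] by auto
    ultimately have "g (hi - 1) \<noteq> g lo" by simp
    then have "g i = g (hi - 1)"
      using card_le_two_eq[OF _ two, of "g lo" "g i" "g (hi - 1)"] \<open>g i \<noteq> g lo\<close> i \<open>lo < hi\<close>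
      by auto
    with False show ?thesis by simp
  qed
  moreover have "Suc (Max S) \<in> {lo<..hi}" using max by auto
  ultimately show ?thesis by blast
qed

lemma discrete_derivs_eq_image:
  assumes "n \<ge> 1"
  shows "discrete_derivs n f = (\<lambda>i. f (Suc i) - f i) ` {1..<n}"
proof -
  have "{1..n - 1} = {1..<n}" using assms by auto
  then show ?thesis unfolding discrete_derivs_def by (auto simp del: atLeastLessThan_iff)
qed

lemma candidate_iff:
  "j \<in> candidates n f \<longleftrightarrow> j \<in> {1..n} \<and> aff1 f (real j) = aff2 n f (real j)"
  unfolding candidates_def by simp

lemma convex_imp_final_test:
  assumes "n \<ge> 2" and two: "num_discrete_derivs n f \<le> 2" and convex: "convex_on_pts {1..n} f"
  shows "candidates n f \<noteq> {} \<and> (\<forall>j\<in>candidates n f. final_test n f j)"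
proof -
  have mono: "mono_on {1..<n} (\<lambda>i. f (Suc i) - f i)"
    using convex convex_on_pts_atLeastAtMost_iff by blast
  have card: "card ((\<lambda>i. f (Suc i) - f i) ` {1..<n}) \<le> 2"
    using two discrete_derivs_eq_image[of n f] \<open>n \<ge> 2\<close>
    unfolding num_discrete_derivs_def by simp
  obtain k where k: "k \<in> {1<..n}"
    and step: "\<And>i. i \<in> {1..<n} \<Longrightarrow>
      f (Suc i) - f i = (if i < k then f (Suc 1) - f 1 else f (Suc (n - 1)) - f (n - 1))"
    using mono_on_two_valued_step[OF mono card] \<open>n \<ge> 2\<close> by force
  have "Suc 1 = 2" "Suc (n - 1) = n" using \<open>n \<ge> 2\<close> by simp_all
  note step = step[unfolded this]
  have left: "f i = aff1 f (real i)" if "i \<in> {1..k}" for i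
  proof -
    have "f (Suc m) - f m = f 2 - f 1" if "m \<in> {1..<i}" for m
      using step[of m] that \<open>i \<in> {1..k}\<close> k by auto
    then show ?thesis
      using diffs_const_telescope[of 1 i f "f 2 - f 1"] that by (simp add: aff1_def)
  qed
  have right: "f i = aff2 n f (real i)" if "i \<in> {k..n}" for i
  proof -
    have "f (Suc m) - f m = f n - f (n - 1)" if "m \<in> {i..<n}" for m
      using step[of m] that \<open>i \<in> {k..n}\<close> k by auto
    then show ?thesis
      using diffs_const_telescope[of i n f "f n - f (n - 1)"] that by (simp add: aff2_def)
  qed
  have "k \<in> candidates n f"
    using left[of k] right[of k] k unfolding candidate_iff by auto
  moreover have "final_test n f j" if j: "j \<in> candidates n f" for j
  proof -
    have "f j = aff1 f (real j)"
      using left[of j] right[of j] j unfolding candidate_iff by (cases "j \<le> k") auto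
    moreover have "{1, 2, j, n - 1, n} \<subseteq> {1..n}"
      using j \<open>n \<ge> 2\<close> unfolding candidate_iff by auto
    ultimately show ?thesis
      unfolding final_test_def using convex_on_pts_subset[OF convex] by blast
  qed
  ultimately show ?thesis by blast
qed

lemma final_test_imp_convex:
  assumes "n \<ge> 3" and two: "num_discrete_derivs n f \<le> 2"
    and j: "j \<in> candidates n f" and test: "final_test n f j"
  shows "convex_on_pts {1..n} f"
proof -
  define a where "a = f 2 - f 1"
  define b where "b = f n - f (n - 1)"
  have "(f 2 - f 1) / (real 2 - real 1) \<le> (f n - f (n - 1)) / (real n - real (n - 1))"
    using test \<open>n \<ge> 3\<close> unfolding final_test_def
    by (intro convex_on_pts_slope_mono[of "{1, 2, j, n - 1, n}"]) auto
  then have "a \<le> b" using \<open>n \<ge> 3\<close> unfolding a_def b_def by (simp add: of_nat_diff)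
  define V where "V = discrete_derivs n f"
  have V: "V = (\<lambda>i. f (Suc i) - f i) ` {1..<n}"
    unfolding V_def using discrete_derivs_eq_image \<open>n \<ge> 3\<close> by simp
  have "finite V" by (simp add: V)
  have "card V \<le> 2" using two by (simp add: V_def num_discrete_derivs_def)
  have "a \<in> V" "b \<in> V"
    unfolding V a_def b_def using \<open>n \<ge> 3\<close>
    by (auto simp: numeral_2_eq_2 intro!: image_eqI[of _ _ 1] image_eqI[of _ _ "n - 1"])
  have "j \<in> {1..n}" and fj: "f j = aff1 f (real j)"
    and cand: "aff1 f (real j) = aff2 n f (real j)"
    using j test unfolding candidate_iff final_test_def by auto
  have "f j - f 1 = (real j - real 1) * a" using fj unfolding aff1_def a_def by simp
  then have left: "\<forall>i\<in>{1..<j}. f (Suc i) - f i = a"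
    using \<open>j \<in> {1..n}\<close> V
    by (intro diffs_eq_if_two_valued_and_tight[OF _ \<open>finite V\<close> \<open>card V \<le> 2\<close> \<open>a \<in> V\<close>]) auto
  have "f n - f j = (real n - real j) * b" using fj cand unfolding aff1_def aff2_def b_def by simp
  then have right: "\<forall>i\<in>{j..<n}. f (Suc i) - f i = b"
    using \<open>j \<in> {1..n}\<close> V
    by (intro diffs_eq_if_two_valued_and_tight[OF _ \<open>finite V\<close> \<open>card V \<le> 2\<close> \<open>b \<in> V\<close>]) auto
  have "mono_on {1..<n} (\<lambda>i. f (Suc i) - f i)"
  proof (rule mono_onI)
    fix i i' assume "i \<in> {1..<n}" "i' \<in> {1..<n}" "i \<le> i'"
    then show "f (Suc i) - f i \<le> f (Suc i') - f i'"
      using left right \<open>a \<le> b\<close> by (cases "i < j"; cases "i' < j") auto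
  qed
  then show ?thesis using convex_on_pts_atLeastAtMost_iff by blast
qed

lemma candidates_cong:
  "(\<And>q. q \<in> first_queries n \<Longrightarrow> g q = f q) \<Longrightarrow> candidates n g = candidates n f"
  by (simp add: first_queries_def candidates_def aff1_def aff2_def)

lemma final_test_cong:
  assumes "\<And>q. q \<in> first_queries n \<union> {j} \<Longrightarrow> g q = f q"
  shows "final_test n g j = final_test n f j"
proof -
  have "convex_on_pts {1, 2, j, n - 1, n} g = convex_on_pts {1, 2, j, n - 1, n} f"
    using assms by (intro convex_on_pts_cong) (auto simp: first_queries_def)
  then show ?thesis using assms unfolding final_test_def by (simp add: first_queries_def aff1_def)
qed

lemma card_first_queries_insert: "card (first_queries n \<union> {j}) \<le> 5"
proof -
  have "card (first_queries n) \<le> 4" unfolding first_queries_def by (simp add: card_insert_if)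
  then show ?thesis using card_Un_le[of "first_queries n" "{j}"] by simp
qed

theorem theorem1:
  fixes n :: nat and f :: "nat \<Rightarrow> real"
  assumes "n \<ge> 3"
    and "num_discrete_derivs n f \<le> 2"
  shows
    "(\<forall>g. (\<forall>q\<in>first_queries n. g q = f q) \<longrightarrow> candidates n g = candidates n f)
     \<and> (\<forall>j \<in> candidates n f. card (first_queries n \<union> {j}) \<le> 5
          \<and> (\<forall>g. (\<forall>q\<in>first_queries n \<union> {j}. g q = f q) \<longrightarrow> final_test n g j = final_test n f j))
     \<and> (candidates n f = {} \<longrightarrow> \<not> convex_on_pts {1..n} f)
     \<and> (\<forall>j \<in> candidates n f. final_test n f j \<longleftrightarrow> convex_on_pts {1..n} f)"
proof (intro conjI ballI allI impI)
  show "candidates n g = candidates n f" if "\<forall>q\<in>first_queries n. g q = f q" for g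
    using that by (intro candidates_cong) simp
  show "card (first_queries n \<union> {j}) \<le> 5" for j
    by (rule card_first_queries_insert)
  show "final_test n g j = final_test n f j" if "\<forall>q\<in>first_queries n \<union> {j}. g q = f q" for g j
    using that by (intro final_test_cong) blast
  show "\<not> convex_on_pts {1..n} f" if "candidates n f = {}"
    using that convex_imp_final_test[of n f] assms by auto
  show "final_test n f j \<longleftrightarrow> convex_on_pts {1..n} f" if "j \<in> candidates n f" for j
    using that convex_imp_final_test[of n f] final_test_imp_convex[of n f j] assms by auto
qed

end
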